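(* For every sequent $\Gamma$ and every formula $A$ of MRL, the sequent $\Gamma, \mathcal{R}{:}A$ (where $\mathcal{R}$ is the full set of roles) is derivable in MRL.
   Context: Fix a nonempty set $\mathcal{R}$ (the set of roles). For $R\subseteq\mathcal{R}$ write $\overline{R}=\mathcal{R}\setminus R$. An ultrafilter $\mathcal{U}$ on $\mathcal{R}$ is a set of subsets of $\mathcal{R}$ such that $\mathcal{R}\in\mathcal{U}$; $R_1\in\mathcal{U}$ and $R_1\subseteq R_2$ imply $R_2\in\mathcal{U}$; $R_1,R_2\in\mathcal{U}$ imply $R_1\cap R_2\in\mathcal{U}$; and for every $R\subseteq\mathcal{R}$, $R\in\mathcal{U}$ or $\overline{R}\in\mathcal{U}$. An endomorphism is any function $f:\mathcal{R}\to\mathcal{R}$, and $f^{-1}(R)$ denotes the preimage of $R$. Fix a first-order language of terms $t$ with variables $x$, and a collection of primitive (atomic) formulas $a$ (which may contain terms). Formulas of MRL: $A ::= a \mid \neg_f(A) \mid A_1\wedge_{\mathcal{U}} A_2 \mid A\supset_{f,\mathcal{U}} B \mid \forall_{\mathcal{U}}(\lambda x.A)$, with $f$ an endomorphism and $\mathcal{U}$ an ultrafilter on $\mathcal{R}$; $x$ is bound in $\forall_{\mathcal{U}}(\lambda x.A)$, and $A[t/x]$ is capture-avoiding substitution. An i-formula is a pair $R{:}A$ with $R\subseteq\mathcal{R}$ and $A$ a formula; a sequent is a finite multiset of i-formulas, and comma denotes multiset union. Derivability in MRL is given by the rules (premises $\Rightarrow$ conclusion, $\Gamma,\Gamma_1,\Gamma_2$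 arbitrary sequents): (Id) $\Gamma, R_1{:}a,\ldots,R_n{:}a$ is derivable whenever $n\ge1$ and $R_1,\ldots,R_n$ are pairwise disjoint with union $\mathcal{R}$; (Weaken) $\Gamma,R{:}A,R{:}A \Rightarrow \Gamma,R{:}A$; ($\neg$) $\Gamma, f^{-1}(R){:}A \Rightarrow \Gamma, R{:}\neg_f(A)$; ($\wedge$-neg-l) if $R\notin\mathcal{U}$: $\Gamma,R{:}A\Rightarrow\Gamma,R{:}A\wedge_{\mathcal{U}}B$; ($\wedge$-neg-r) if $R\notin\mathcal{U}$: $\Gamma,R{:}B\Rightarrow\Gamma,R{:}A\wedge_{\mathcal{U}}B$; ($\wedge$-pos) if $R\in\mathcal{U}$: $(\Gamma,R{:}A;\ \Gamma,R{:}B)\Rightarrow\Gamma,R{:}A\wedge_{\mathcal{U}}B$; ($\supset$-neg) if $R\notin\mathcal{U}$: $\Gamma,f^{-1}(R){:}A,R{:}B\Rightarrow\Gamma,R{:}A\supset_{f,\mathcal{U}}B$; ($\supset$-pos) if $R\in\mathcal{U}$: $(\Gamma_1,f^{-1}(R){:}A;\ \Gamma_2,R{:}B)\Rightarrow\Gamma_1,\Gamma_2,R{:}A\supset_{f,\mathcal{U}}B$; ($\forall$-neg) if $R\notin\mathcal{U}$ and $t$ is a term: $\Gamma,R{:}A[t/x]\Rightarrow\Gamma,R{:}\forall_{\mathcal{U}}(\lambda x.A)$; ($\forall$-pos) if $R\in\mathcal{U}$ and $x$ has no free occurrence in $\Gamma$: $\Gamma,R{:}A\Rightarrow\Gamma,R{:}\forall_{\mathcal{U}}(\lambda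 x.A)$. A sequent is derivable in MRL if it is the conclusion of a finite derivation tree built from these rules. *)

theory Defs
  imports Main "HOL-Library.Multiset"
begin

text \<open>The set of roles is the (nonempty) type 'r; the full set of roles is UNIV.
  Ultrafilters are defined exactly as in the paper (no requirement that the
  empty set is excluded).\<close>

definition is_ultrafilter :: "'r set set \<Rightarrow> bool" where
  "is_ultrafilter U \<longleftrightarrow>
     UNIV \<in> U \<and>
     (\<forall>R1 R2. R1 \<in> U \<and> R1 \<subseteq> R2 \<longrightarrow> R2 \<in> U) \<and>
     (\<forall>R1 R2. R1 \<in> U \<and> R2 \<in> U \<longrightarrow> R1 \<inter> R2 \<in> U) \<and>
     (\<forall>R. R \<in> U \<or> - R \<in> U)"

typedef 'r ultrafilter = "{U :: 'r set set. is_ultrafilter U}"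
  by (rule exI[of _ UNIV]) (simp add: is_ultrafilter_def)

definition in_uf :: "'r set \<Rightarrow> 'r ultrafilter \<Rightarrow> bool" where
  "in_uf R U \<longleftrightarrow> R \<in> Rep_ultrafilter U"

section \<open>Syntax (locally nameless: free variables FVar, bound variables BVar as de Bruijn indices)\<close>

datatype 'f trm = FVar nat | BVar nat | Fn 'f "'f trm list"

datatype ('r, 'f, 'p) fm =
    Atom 'p "'f trm list"
  | Neg "'r \<Rightarrow> 'r" "('r, 'f, 'p) fm"
  | Conj "'r ultrafilter" "('r, 'f, 'p) fm" "('r, 'f, 'p) fm"
  | Imp "'r \<Rightarrow> 'r" "'r ultrafilter" "('r, 'f, 'p) fm" "('r, 'f, 'p) fm"
  | Forall "'r ultrafilter" "('r, 'f, 'p) fm"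

type_synonym ('r, 'f, 'p) sequent = "('r set \<times> ('r, 'f, 'p) fm) multiset"

fun open_trm :: "nat \<Rightarrow> 'f trm \<Rightarrow> 'f trm \<Rightarrow> 'f trm" where
  "open_trm k s (FVar x) = FVar x"
| "open_trm k s (BVar i) = (if i = k then s else BVar i)"
| "open_trm k s (Fn f ts) = Fn f (map (open_trm k s) ts)"

fun open_fm :: "nat \<Rightarrow> 'f trm \<Rightarrow> ('r, 'f, 'p) fm \<Rightarrow> ('r, 'f, 'p) fm" where
  "open_fm k s (Atom p ts) = Atom p (map (open_trm k s) ts)"
| "open_fm k s (Neg f A) = Neg f (open_fm k s A)"
| "open_fm k s (Conj U A B) = Conj U (open_fm k s A) (open_fm k s B)"
| "open_fm k s (Imp f U A B) = Imp f U (open_fm k s A) (open_fm k s B)"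
| "open_fm k s (Forall U A) = Forall U (open_fm (Suc k) s A)"

fun fv_trm :: "'f trm \<Rightarrow> nat set" where
  "fv_trm (FVar x) = {x}"
| "fv_trm (BVar i) = {}"
| "fv_trm (Fn f ts) = (\<Union>t\<in>set ts. fv_trm t)"

fun fv_fm :: "('r, 'f, 'p) fm \<Rightarrow> nat set" where
  "fv_fm (Atom p ts) = (\<Union>t\<in>set ts. fv_trm t)"
| "fv_fm (Neg f A) = fv_fm A"
| "fv_fm (Conj U A B) = fv_fm A \<union> fv_fm B"
| "fv_fm (Imp f U A B) = fv_fm A \<union> fv_fm B"
| "fv_fm (Forall U A) = fv_fm A"

definition fv_seq :: "('r, 'f, 'p) sequent \<Rightarrow> nat set" where
  "fv_seq \<Gamma> = (\<Union>RA\<in>set_mset \<Gamma>. fv_fm (snd RA))"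

fun lc_trm_at :: "nat \<Rightarrow> 'f trm \<Rightarrow> bool" where
  "lc_trm_at k (FVar x) = True"
| "lc_trm_at k (BVar i) = (i < k)"
| "lc_trm_at k (Fn f ts) = (\<forall>t\<in>set ts. lc_trm_at k t)"

fun lc_fm_at :: "nat \<Rightarrow> ('r, 'f, 'p) fm \<Rightarrow> bool" where
  "lc_fm_at k (Atom p ts) = (\<forall>t\<in>set ts. lc_trm_at k t)"
| "lc_fm_at k (Neg f A) = lc_fm_at k A"
| "lc_fm_at k (Conj U A B) = (lc_fm_at k A \<and> lc_fm_at k B)"
| "lc_fm_at k (Imp f U A B) = (lc_fm_at k A \<and> lc_fm_at k B)"
| "lc_fm_at k (Forall U A) = lc_fm_at (Suc k) A"

abbreviation lc_trm :: "'f trm \<Rightarrow> bool" where "lc_trm \<equiv> lc_trm_at 0"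
abbreviation lc_fm :: "('r, 'f, 'p) fm \<Rightarrow> bool" where "lc_fm \<equiv> lc_fm_at 0"

inductive derivable :: "('r, 'f, 'p) sequent \<Rightarrow> bool" where
  Id: "\<lbrakk> Rs \<noteq> [];
         \<forall>i<length Rs. \<forall>j<length Rs. i \<noteq> j \<longrightarrow> Rs ! i \<inter> Rs ! j = {};
         \<Union>(set Rs) = UNIV \<rbrakk>
       \<Longrightarrow> derivable (\<Gamma> + mset (map (\<lambda>R. (R, Atom p ts)) Rs))"
| Weaken: "derivable (\<Gamma> + {#(R, A), (R, A)#}) \<Longrightarrow> derivable (\<Gamma> + {#(R, A)#})"
| NegR: "derivable (\<Gamma> + {#(f -` R, A)#}) \<Longrightarrow> derivable (\<Gamma> + {#(R, Neg f A)#})"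
| ConjNegL: "\<lbrakk> \<not> in_uf R U; derivable (\<Gamma> + {#(R, A)#}) \<rbrakk>
             \<Longrightarrow> derivable (\<Gamma> + {#(R, Conj U A B)#})"
| ConjNegR: "\<lbrakk> \<not> in_uf R U; derivable (\<Gamma> + {#(R, B)#}) \<rbrakk>
             \<Longrightarrow> derivable (\<Gamma> + {#(R, Conj U A B)#})"
| ConjPos: "\<lbrakk> in_uf R U; derivable (\<Gamma> + {#(R, A)#}); derivable (\<Gamma> + {#(R, B)#}) \<rbrakk>
             \<Longrightarrow> derivable (\<Gamma> + {#(R, Conj U A B)#})"
| ImpNeg: "\<lbrakk> \<not> in_uf R U; derivable (\<Gamma> + {#(f -` R, A), (R, B)#}) \<rbrakk>
             \<Longrightarrow> derivable (\<Gamma> + {#(R, Imp f U A B)#})"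
| ImpPos: "\<lbrakk> in_uf R U; derivable (\<Gamma>1 + {#(f -` R, A)#}); derivable (\<Gamma>2 + {#(R, B)#}) \<rbrakk>
             \<Longrightarrow> derivable (\<Gamma>1 + \<Gamma>2 + {#(R, Imp f U A B)#})"
| ForallNeg: "\<lbrakk> \<not> in_uf R U; lc_trm t; derivable (\<Gamma> + {#(R, open_fm 0 t A)#}) \<rbrakk>
             \<Longrightarrow> derivable (\<Gamma> + {#(R, Forall U A)#})"
| ForallPos: "\<lbrakk> in_uf R U; x \<notin> fv_seq \<Gamma>; x \<notin> fv_fm A;
                derivable (\<Gamma> + {#(R, open_fm 0 (FVar x) A)#}) \<rbrakk>
             \<Longrightarrow> derivable (\<Gamma> + {#(R, Forall U A)#})"

end

theory Submission
  imports Defs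
begin

text \<open>The full role set belongs to every ultrafilter, so every connective can be
  introduced by its positive rule, and the positive rules only require the full
  role set again in their premises (because \<open>f -` UNIV = UNIV\<close>).  An atom is closed
  by the identity axiom with the one-block partition, an implication by splitting off
  the empty context for its consequent, and a quantifier by an eigenvariable.  Since
  opening a quantifier does not change the number of connectives, induction on that
  number proves every \<open>\<Gamma>, UNIV:A\<close>.\<close>

fun connectives :: "('r, 'f, 'p) fm \<Rightarrow> nat" where
  "connectives (Atom p ts) = 0"
| "connectives (Neg f A) = Suc (connectives A)"
| "connectives (Conj U A B) = Suc (connectives A + connectives B)"
| "connectives (Imp f U A B) = Suc (connectives A + connectives B)"
| "connectives (Forall U A) = Suc (connectives A)"

lemma connectives_open_fm [simp]: "connectives (open_fm k s A) = connectives A"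
  by (induction A arbitrary: k) auto

lemma lc_trm_at_open_trm:
  "lc_trm_at (Suc k) t \<Longrightarrow> lc_trm_at k (open_trm k (FVar x) t)"
  by (induction t) auto

lemma lc_fm_at_open_fm:
  "lc_fm_at (Suc k) A \<Longrightarrow> lc_fm_at k (open_fm k (FVar x) A)"
  by (induction A arbitrary: k) (auto simp: lc_trm_at_open_trm)

lemma finite_fv_trm: "finite (fv_trm t)"
  by (induction t) auto

lemma finite_fv_fm: "finite (fv_fm A)"
  by (induction A) (auto simp: finite_fv_trm)

lemma finite_fv_seq: "finite (fv_seq \<Gamma>)"
  by (auto simp: fv_seq_def finite_fv_fm)

lemma in_uf_UNIV: "in_uf UNIV U"
  using Rep_ultrafilter[of U] by (simp add: in_uf_def is_ultrafilter_def)

lemma derivable_UNIV: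
  assumes "lc_fm A"
  shows "derivable (\<Gamma> + {#(UNIV, A)#})"
  using assms
proof (induction A arbitrary: \<Gamma> rule: measure_induct_rule[of connectives])
  case (less A)
  show ?case
  proof (cases A)
    case (Atom p ts)
    have "derivable (\<Gamma> + mset (map (\<lambda>R. (R, Atom p ts)) [UNIV]))"
      by (rule derivable.Id) auto
    then show ?thesis using Atom by simp
  next
    case (Neg f B)
    have "derivable (\<Gamma> + {#(f -` UNIV, B)#})" using less Neg by simp
    then show ?thesis using Neg derivable.NegR by blast
  next
    case (Conj U B C)
    have "derivable (\<Gamma> + {#(UNIV, B)#})" "derivable (\<Gamma> + {#(UNIV, C)#})"
      using less Conj by simp_all
    then show ?thesis using Conj derivable.ConjPos[OF in_uf_UNIV] by simp
  next
    case (Imp f U B C)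
    have "derivable (\<Gamma> + {#(f -` UNIV, B)#})" "derivable ({#} + {#(UNIV, C)#})"
      using less Imp by simp_all
    then have "derivable (\<Gamma> + {#} + {#(UNIV, Imp f U B C)#})"
      by (rule derivable.ImpPos[OF in_uf_UNIV])
    then show ?thesis using Imp by simp
  next
    case (Forall U B)
    obtain x where "x \<notin> fv_seq \<Gamma>" "x \<notin> fv_fm B"
      using ex_new_if_finite[OF infinite_UNIV_nat] finite_fv_seq finite_fv_fm
      by (metis UnCI finite_Un)
    have "lc_fm (open_fm 0 (FVar x) B)" using less Forall lc_fm_at_open_fm by simp
    then have "derivable (\<Gamma> + {#(UNIV, open_fm 0 (FVar x) B)#})"
      using less Forall by simp
    with \<open>x \<notin> fv_seq \<Gamma>\<close> \<open>x \<notin> fv_fm B\<close> show ?thesis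
      using Forall derivable.ForallPos[OF in_uf_UNIV] by simp
  qed
qed

theorem mainTheorem2:
  fixes \<Gamma> :: "('r, 'f, 'p) sequent" and A :: "('r, 'f, 'p) fm"
  assumes "lc_fm A"
    and "\<forall>RB\<in>#\<Gamma>. lc_fm (snd RB)"
  shows "derivable (\<Gamma> + {#(UNIV, A)#})"
  using assms(1) by (rule derivable_UNIV)

end
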